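(* Let $G=S_n$ and $H=S_a\wr S_a$ (the stabiliser of a partition of $\{1,\dots,n\}$ into $a$ blocks of size $a$), where $n=a^2$ and $a\geqslant 3$. Then $b(G,H)=3$.
   Context: For a subgroup $H\leqslant G$, $H_G=\bigcap_{g\in G}H^g$ is the core of $H$, and $b(G,H)=\min\{|S| : S\subseteq G,\ \bigcap_{g\in S}H^g=H_G\}$. Equivalently here, $b(G,H)$ is the minimal number of partitions of $\{1,\dots,n\}$ into $a$ parts of size $a$ whose common stabiliser in $S_n$ is trivial. *)

theory Defs
  imports "HOL-Combinatorics.Permutations"
begin

definition Sym :: "nat \<Rightarrow> (nat \<Rightarrow> nat) set" where
  "Sym n = {p. p permutes {..<n}}"

definition conjugate :: "(nat \<Rightarrow> nat) set \<Rightarrow> (nat \<Rightarrow> nat) \<Rightarrow> (nat \<Rightarrow> nat) set" where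
  "conjugate H g = {inv g \<circ> h \<circ> g | h. h \<in> H}"

definition core :: "(nat \<Rightarrow> nat) set \<Rightarrow> (nat \<Rightarrow> nat) set \<Rightarrow> (nat \<Rightarrow> nat) set" where
  "core G H = (\<Inter>g\<in>G. conjugate H g)"

definition base_size :: "(nat \<Rightarrow> nat) set \<Rightarrow> (nat \<Rightarrow> nat) set \<Rightarrow> nat" where
  "base_size G H = (LEAST k. \<exists>S. S \<subseteq> G \<and> finite S \<and> card S = k \<and>
                        (\<Inter>g\<in>S. conjugate H g) = core G H)"

definition std_partition :: "nat \<Rightarrow> nat set set" where
  "std_partition a = {{a * i + j | j. j < a} | i. i < a}"

definition wreath_stab :: "nat \<Rightarrow> (nat \<Rightarrow> nat) set" where
  "wreath_stab a = {p \<in> Sym (a^2). \<forall>B \<in> std_partition a. p ` B \<in> std_partition a}"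

end

theory Submission
  imports Defs
begin

text \<open>
  A point x < a^2 is the cell (x div a, x mod a) of an a \<times> a grid, and h lies in the conjugate
  of wreath_stab a by g exactly when h preserves the partition into the blocks g^-1(row).
  Two such partitions never have trivial common stabiliser: either two points share a block in
  both, and swapping them preserves both, or every block of one meets every block of the other in
  exactly one point, and then exchanging two blocks of the first partition, point by point along
  the blocks of the second, preserves both.
  Three partitions suffice: a permutation preserving rows and columns acts as
  (r, c) \<mapsto> (\<sigma> r, \<tau> c), and for a \<ge> 3 a suitable staircase partition is preserved by such a
  map only if \<sigma> and \<tau> are identities.
\<close>

section \<open>Permutations preserving the fibres of a labelling\<close>

definition fibres :: "('a \<Rightarrow> 'b) \<Rightarrow> 'a set \<Rightarrow> 'a set set" where
  "fibres f A = (\<lambda>i. {x \<in> A. f x = i}) ` f ` A"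

definition preserves_fibres :: "('a \<Rightarrow> 'b) \<Rightarrow> 'a set \<Rightarrow> ('a \<Rightarrow> 'a) \<Rightarrow> bool" where
  "preserves_fibres f A h \<longleftrightarrow> (\<forall>u\<in>A. \<forall>v\<in>A. f (h u) = f (h v) \<longleftrightarrow> f u = f v)"

lemma preserves_fibresI_relabel:
  assumes "inj k" and "\<And>x. x \<in> A \<Longrightarrow> f (h x) = k (f x)"
  shows "preserves_fibres f A h"
  using assms by (simp add: preserves_fibres_def inj_eq)

lemma preserves_fibres_cong:
  assumes "h ` A \<subseteq> A" and "\<And>x. x \<in> A \<Longrightarrow> f x = f' x"
  shows "preserves_fibres f A h \<longleftrightarrow> preserves_fibres f' A h"
  using assms unfolding preserves_fibres_def by (metis image_subset_iff)

lemma permutes_image_fibres_iff: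
  assumes q: "q permutes A"
  shows "(\<forall>B\<in>fibres f A. q ` B \<in> fibres f A) \<longleftrightarrow> preserves_fibres f A q"
proof
  assume img: "\<forall>B\<in>fibres f A. q ` B \<in> fibres f A"
  show "preserves_fibres f A q"
    unfolding preserves_fibres_def
  proof (intro ballI)
    fix u v assume u: "u \<in> A" and v: "v \<in> A"
    have "q ` {x \<in> A. f x = f u} \<in> fibres f A"
      using img u by (auto simp: fibres_def)
    then obtain i where i: "q ` {x \<in> A. f x = f u} = {x \<in> A. f x = i}"
      by (auto simp: fibres_def)
    have "q u \<in> {x \<in> A. f x = i}"
      using i u by (metis (mono_tags, lifting) image_eqI mem_Collect_eq)
    then have "i = f (q u)"
      by simp
    moreover have "q v \<in> q ` {x \<in> A. f x = f u} \<longleftrightarrow> v \<in> {x \<in> A. f x = f u}"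
      using v by (intro inj_on_image_mem_iff[OF permutes_inj_on[OF q]]) auto
    ultimately show "f (q u) = f (q v) \<longleftrightarrow> f u = f v"
      using i v permutes_in_image[OF q] by (metis (mono_tags, lifting) mem_Collect_eq)
  qed
next
  assume pf: "preserves_fibres f A q"
  have "q ` {x \<in> A. f x = f u} = {x \<in> A. f x = f (q u)}" if u: "u \<in> A" for u
  proof
    show "q ` {x \<in> A. f x = f u} \<subseteq> {x \<in> A. f x = f (q u)}"
      using pf u permutes_in_image[OF q] by (auto simp: preserves_fibres_def)
    show "{x \<in> A. f x = f (q u)} \<subseteq> q ` {x \<in> A. f x = f u}"
    proof
      fix y assume y: "y \<in> {x \<in> A. f x = f (q u)}"
      then obtain v where "v \<in> A" "y = q v"
        using permutes_image[OF q] by blast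
      then show "y \<in> q ` {x \<in> A. f x = f u}"
        using pf u y by (auto simp: preserves_fibres_def)
    qed
  qed
  then show "\<forall>B\<in>fibres f A. q ` B \<in> fibres f A"
    using permutes_in_image[OF q] by (auto simp: fibres_def)
qed

lemma preserves_fibres_conj:
  assumes g: "g permutes A"
  shows "preserves_fibres f A (g \<circ> h \<circ> inv g) \<longleftrightarrow> preserves_fibres (f \<circ> g) A h"
proof -
  have "preserves_fibres f (g ` A) (g \<circ> h \<circ> inv g) \<longleftrightarrow> preserves_fibres (f \<circ> g) A h"
    by (simp add: preserves_fibres_def permutes_inverses[OF g])
  then show ?thesis
    by (simp add: permutes_image[OF g])
qed

lemma permutes_conj_iff:
  assumes g: "g permutes A"
  shows "g \<circ> h \<circ> inv g permutes A \<longleftrightarrow> h permutes A"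
proof
  assume "g \<circ> h \<circ> inv g permutes A"
  then have "inv g \<circ> (g \<circ> h \<circ> inv g) \<circ> g permutes A"
    using g permutes_compose permutes_inv by blast
  moreover have "inv g \<circ> (g \<circ> h \<circ> inv g) \<circ> g = h"
    by (simp add: fun_eq_iff permutes_inverses[OF g])
  ultimately show "h permutes A"
    by simp
qed (use g permutes_compose permutes_inv in blast)

lemma mem_conjugate_iff:
  assumes "bij g"
  shows "h \<in> conjugate H g \<longleftrightarrow> g \<circ> h \<circ> inv g \<in> H"
proof -
  have "h = inv g \<circ> q \<circ> g \<longleftrightarrow> q = g \<circ> h \<circ> inv g" for q
    using assms by (auto simp: fun_eq_iff bij_is_inj bij_is_surj surj_f_inv_f)
  then show ?thesis
    unfolding conjugate_def by auto
qed

lemma div_less_of_less_square: "(z::nat) < a^2 \<Longrightarrow> z div a < a"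
  by (cases "a = 0") (auto simp: power2_eq_square div_less_iff_less_mult)

lemma grid_index_less: "(r::nat) < a \<Longrightarrow> c < a \<Longrightarrow> a * r + c < a^2"
proof -
  assume "r < a" "c < a"
  then have "a * Suc r \<le> a * a"
    by (intro mult_le_mono2) simp
  then show ?thesis
    using \<open>c < a\<close> by (simp add: power2_eq_square)
qed

lemma std_partition_fibres:
  assumes "0 < a"
  shows "std_partition a = fibres (\<lambda>x. x div a) {..<a^2}"
proof -
  have labels: "(\<lambda>x. x div a) ` {..<a^2} = {..<a}"
  proof
    show "(\<lambda>x. x div a) ` {..<a^2} \<subseteq> {..<a}"
      using div_less_of_less_square by auto
    show "{..<a} \<subseteq> (\<lambda>x. x div a) ` {..<a^2}"
    proof
      fix i assume "i \<in> {..<a}"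
      then have "a * i < a^2" "a * i div a = i"
        using grid_index_less[of i a 0] assms by auto
      then show "i \<in> (\<lambda>x. x div a) ` {..<a^2}"
        by (metis image_eqI lessThan_iff)
    qed
  qed
  have block: "{a * i + j |j. j < a} = {x \<in> {..<a^2}. x div a = i}" if "i < a" for i
  proof
    show "{a * i + j |j. j < a} \<subseteq> {x \<in> {..<a^2}. x div a = i}"
      using grid_index_less[OF that] by auto
    show "{x \<in> {..<a^2}. x div a = i} \<subseteq> {a * i + j |j. j < a}"
    proof
      fix x assume "x \<in> {x \<in> {..<a^2}. x div a = i}"
      then have "x = a * i + x mod a"
        using mult_div_mod_eq[of a x] by simp
      then show "x \<in> {a * i + j |j. j < a}"
        using assms mod_less_divisor by blast
    qed
  qed
  have "std_partition a = (\<lambda>i. {a * i + j |j. j < a}) ` {..<a}"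
    by (auto simp: std_partition_def)
  also have "\<dots> = (\<lambda>i. {x \<in> {..<a^2}. x div a = i}) ` {..<a}"
    using block by (intro image_cong) auto
  finally show ?thesis
    by (simp add: fibres_def labels)
qed

lemma wreath_stab_iff:
  assumes "0 < a"
  shows "q \<in> wreath_stab a \<longleftrightarrow> q permutes {..<a^2} \<and> preserves_fibres (\<lambda>x. x div a) {..<a^2} q"
  using permutes_image_fibres_iff[of q "{..<a^2}" "\<lambda>x. x div a"]
  by (auto simp: wreath_stab_def Sym_def std_partition_fibres[OF assms])

lemma mem_conjugate_wreath_stab_iff:
  assumes g: "g permutes {..<a^2}" and "0 < a"
  shows "h \<in> conjugate (wreath_stab a) g \<longleftrightarrow>
    h permutes {..<a^2} \<and> preserves_fibres (\<lambda>x. g x div a) {..<a^2} h"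
  using permutes_conj_iff[OF g, of h] preserves_fibres_conj[OF g, of "\<lambda>x. x div a" h]
  by (simp add: mem_conjugate_iff[OF permutes_bij[OF g]] wreath_stab_iff[OF \<open>0 < a\<close>] o_def)

section \<open>Two partitions never suffice\<close>

lemma two_labellings_common_symmetry:
  assumes A: "finite A" "card A = a * a" and a: "2 \<le> a"
    and f1: "f1 ` A \<subseteq> {..<a}" and f2: "f2 ` A \<subseteq> {..<a}"
  shows "\<exists>h. h permutes A \<and> h \<noteq> id \<and> preserves_fibres f1 A h \<and> preserves_fibres f2 A h"
proof (cases "inj_on (\<lambda>u. (f1 u, f2 u)) A")
  case False
  then obtain u v where uv: "u \<in> A" "v \<in> A" "u \<noteq> v" "f1 u = f1 v" "f2 u = f2 v"
    by (auto simp: inj_on_def)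
  have "preserves_fibres f1 A (transpose u v)" "preserves_fibres f2 A (transpose u v)"
    using uv by (auto intro!: preserves_fibresI_relabel[OF inj_on_id] simp: transpose_def)
  moreover have "transpose u v \<noteq> id"
    using uv(3) by (metis id_apply transpose_apply_first)
  ultimately show ?thesis
    using permutes_swap_id[OF uv(1,2)] by blast
next
  case True
  txt \<open>Every pair of labels is taken by exactly one point, so exchanging the first labels 0 and 1
    lifts to a nontrivial permutation of A.\<close>
  define \<phi> where "\<phi> = (\<lambda>u. (f1 u, f2 u))"
  define \<rho> where "\<rho> = map_prod (transpose (0::nat) 1) (id :: nat \<Rightarrow> nat)"
  have \<phi>_bij: "bij_betw \<phi> A ({..<a} \<times> {..<a})"
  proof -
    have "\<phi> ` A \<subseteq> {..<a} \<times> {..<a}"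
      using f1 f2 by (auto simp: \<phi>_def)
    moreover have "card (\<phi> ` A) = card ({..<a} \<times> {..<a})"
      using True A by (simp add: \<phi>_def card_image card_cartesian_product)
    ultimately show ?thesis
      using True by (simp add: bij_betw_def \<phi>_def card_subset_eq)
  qed
  have \<rho>_grid: "\<rho> p \<in> {..<a} \<times> {..<a}" if "p \<in> {..<a} \<times> {..<a}" for p
    using that a by (auto simp: \<rho>_def transpose_def)
  have \<rho>_\<rho>: "\<rho> (\<rho> p) = p" for p
    by (cases p) (simp add: \<rho>_def)
  have \<phi>_A: "\<phi> ` A = {..<a} \<times> {..<a}"
    using \<phi>_bij by (rule bij_betw_imp_surj_on)
  define h where "h x = (if x \<in> A then inv_into A \<phi> (\<rho> (\<phi> x)) else x)" for x
  have h_into: "h x \<in> A" and \<phi>_h: "\<phi> (h x) = \<rho> (\<phi> x)" if "x \<in> A" for x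
  proof -
    have "\<phi> x \<in> \<phi> ` A"
      using that by (rule imageI)
    then have "\<rho> (\<phi> x) \<in> \<phi> ` A"
      unfolding \<phi>_A by (rule \<rho>_grid)
    then show "h x \<in> A" "\<phi> (h x) = \<rho> (\<phi> x)"
      using that by (simp_all add: h_def inv_into_into f_inv_into_f)
  qed
  have "h (h x) = x" if "x \<in> A" for x
  proof -
    have "\<phi> (h (h x)) = \<phi> x"
      using that by (simp add: h_into \<phi>_h \<rho>_\<rho>)
    then show ?thesis
      using bij_betw_imp_inj_on[OF \<phi>_bij] that h_into by (metis inj_onD)
  qed
  then have "bij_betw h A A"
    using h_into by (intro bij_betw_byWitness[where f' = h]) auto
  then have h_perm: "h permutes A"
    by (rule bij_imp_permutes) (simp add: h_def)
  have "(0, 0) \<in> \<phi> ` A"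
    using \<phi>_A a by simp
  then obtain u where u: "u \<in> A" "\<phi> u = (0, 0)"
    by (metis imageE)
  have "\<phi> (h u) \<noteq> \<phi> u"
    using \<phi>_h[OF u(1)] u(2) by (simp add: \<rho>_def)
  then have "h \<noteq> id"
    by auto
  moreover have "f1 (h x) = transpose 0 1 (f1 x)" "f2 (h x) = id (f2 x)" if "x \<in> A" for x
    using \<phi>_h[OF that] by (simp_all add: \<phi>_def \<rho>_def)
  then have "preserves_fibres f1 A h" "preserves_fibres f2 A h"
    by (auto intro: preserves_fibresI_relabel[OF inj_transpose, where f = f1]
        preserves_fibresI_relabel[OF inj_on_id, where f = f2])
  ultimately show ?thesis
    using h_perm by blast
qed

lemma card_le_2_subset_doubleton:
  assumes "finite S" "card S \<le> 2" "S \<subseteq> A" "x \<in> A"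
  shows "\<exists>y\<in>A. \<exists>z\<in>A. S \<subseteq> {y, z}"
proof -
  consider "card S = 0" | "card S = 1" | "card S = 2"
    using assms(2) by linarith
  then show ?thesis
  proof cases
    case 1
    then show ?thesis
      using assms by auto
  next
    case 2
    then show ?thesis
      using assms(3) by (auto simp: card_1_singleton_iff)
  next
    case 3
    then show ?thesis
      using assms(3) by (auto simp: card_2_iff)
  qed
qed

lemma wreath_stab_no_base_of_size_two:
  assumes a: "2 \<le> a" and S: "S \<subseteq> Sym (a^2)" "finite S" "card S \<le> 2"
  shows "\<exists>h. h \<noteq> id \<and> h \<in> (\<Inter>g\<in>S. conjugate (wreath_stab a) g)"
proof -
  obtain g1 g2 where g: "g1 permutes {..<a^2}" "g2 permutes {..<a^2}" and S_sub: "S \<subseteq> {g1, g2}"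
    using card_le_2_subset_doubleton[OF S(2,3,1), of id] by (auto simp: Sym_def permutes_id)
  have labels: "(\<lambda>x. g x div a) ` {..<a^2} \<subseteq> {..<a}" if "g permutes {..<a^2}" for g
    using permutes_in_image[OF that] div_less_of_less_square by auto
  obtain h where h: "h permutes {..<a^2}" "h \<noteq> id"
    "preserves_fibres (\<lambda>x. g1 x div a) {..<a^2} h" "preserves_fibres (\<lambda>x. g2 x div a) {..<a^2} h"
    using two_labellings_common_symmetry[OF _ _ a labels[OF g(1)] labels[OF g(2)]]
    by (auto simp: power2_eq_square)
  then have "h \<in> conjugate (wreath_stab a) g1" "h \<in> conjugate (wreath_stab a) g2"
    using a g by (simp_all add: mem_conjugate_wreath_stab_iff)
  then show ?thesis
    using S_sub h(2) by blast
qed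

section \<open>Three partitions suffice\<close>

text \<open>
  The staircase partition of the grid: block 0 is column 0 and, for i > 0, block i consists of
  (i, 1), ..., (i, i) and (i - 1, i), ..., (i - 1, a - 1); then the cells (0, 0) and (0, 1)
  exchange blocks. It is the partition induced by third_perm below.
\<close>
definition third_label :: "nat \<Rightarrow> nat \<Rightarrow> nat" where
  "third_label r c =
    (if c = 0 then (if r = 0 then 1 else 0)
     else if r = 0 \<and> c = 1 then 0
     else if c \<le> r then r else r + 1)"

lemma third_label_column_one: "third_label r 1 = r"
  by (simp add: third_label_def)

context
  fixes a :: nat and \<sigma> \<tau> :: "nat \<Rightarrow> nat"
  assumes a: "3 \<le> a"
    and \<sigma>_into: "\<sigma> ` {..<a} \<subseteq> {..<a}" and \<tau>_into: "\<tau> ` {..<a} \<subseteq> {..<a}"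
    and \<sigma>_inj: "inj_on \<sigma> {..<a}" and \<tau>_inj: "inj_on \<tau> {..<a}"
    and preserves: "preserves_fibres (\<lambda>(r, c). third_label r c) ({..<a} \<times> {..<a}) (map_prod \<sigma> \<tau>)"
begin

lemma third_label_symmetry_iff:
  assumes "r < a" "c < a" "r' < a" "c' < a"
  shows "third_label (\<sigma> r) (\<tau> c) = third_label (\<sigma> r') (\<tau> c') \<longleftrightarrow> third_label r c = third_label r' c'"
  using preserves[unfolded preserves_fibres_def, rule_format, of "(r, c)" "(r', c')"] assms
  by simp

text \<open>Column 1 is the only column whose cells lie in pairwise distinct blocks.\<close>
lemma third_label_symmetry_column_one: "\<tau> 1 = 1"
proof (rule ccontr)
  assume ne: "\<tau> 1 \<noteq> 1"
  define d where "d = \<tau> 1"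
  have "d < a"
    using \<tau>_into a by (auto simp: d_def image_subset_iff)
  obtain p p' where pp: "p < a" "p' < a" "p \<noteq> p'" "third_label p d = third_label p' d"
  proof (cases "d = 0")
    case True
    then show ?thesis
      using that[of 1 2] a by (auto simp: third_label_def)
  next
    case False
    then show ?thesis
      using that[of "d - 1" d] ne \<open>d < a\<close> by (auto simp: third_label_def d_def)
  qed
  have \<sigma>_onto: "\<sigma> ` {..<a} = {..<a}"
    using \<sigma>_into \<sigma>_inj by (intro endo_inj_surj) auto
  then obtain r r' where r: "r < a" "\<sigma> r = p" and r': "r' < a" "\<sigma> r' = p'"
    using pp(1,2) by (metis imageE lessThan_iff)
  have "third_label r 1 = third_label r' 1"
    using third_label_symmetry_iff[of r 1 r' 1] r r' pp a by (auto simp: d_def)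
  then have "r = r'"
    by (simp add: third_label_def split: if_splits)
  then show False
    using r r' pp by simp
qed

lemma third_label_symmetry_maps_label:
  assumes "r' < a" "c' < a" "r < a" "third_label r' c' = r"
  shows "third_label (\<sigma> r') (\<tau> c') = \<sigma> r"
proof -
  have "third_label (\<sigma> r') (\<tau> c') = third_label (\<sigma> r) (\<tau> 1)"
    using third_label_symmetry_iff[of r' c' r 1] assms a by (simp add: third_label_def)
  then show ?thesis
    by (metis third_label_symmetry_column_one third_label_column_one)
qed

text \<open>Both cells (c, c) and (c - 1, c) lie in block c, which pins down the images of rows c - 1 and c.\<close>
lemma third_label_symmetry_step:
  assumes c: "2 \<le> c" "c < a"
  shows "\<sigma> c = Suc (\<sigma> (c - 1)) \<and> \<tau> c = \<sigma> c \<and> 1 \<le> \<sigma> (c - 1)"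
proof -
  have diag: "third_label (\<sigma> c) (\<tau> c) = \<sigma> c"
    using third_label_symmetry_maps_label[of c c c] c by (simp add: third_label_def)
  have above: "third_label (\<sigma> (c - 1)) (\<tau> c) = \<sigma> c"
    using third_label_symmetry_maps_label[of "c - 1" c c] c by (simp add: third_label_def)
  have "\<tau> c \<noteq> \<tau> 1"
    using \<tau>_inj c a by (auto dest: inj_onD)
  then have "\<tau> c \<noteq> 1"
    by (metis third_label_symmetry_column_one)
  moreover have "\<sigma> (c - 1) \<noteq> \<sigma> c"
    using \<sigma>_inj c by (auto dest: inj_onD)
  moreover have "1 \<le> \<tau> c \<and> \<tau> c \<le> \<sigma> c"
    using diag \<open>\<tau> c \<noteq> 1\<close> by (auto simp: third_label_def split: if_splits)
  ultimately show ?thesis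
    using above by (auto simp: third_label_def split: if_splits)
qed

lemma third_label_symmetry_trivial:
  shows "r < a \<Longrightarrow> \<sigma> r = r" and "c < a \<Longrightarrow> \<tau> c = c"
proof -
  have chain: "\<sigma> (1 + k) = \<sigma> 1 + k" if "1 + k < a" for k
    using that
  proof (induction k)
    case (Suc k)
    then show ?case
      using third_label_symmetry_step[of "2 + k"] by simp
  qed simp
  have "1 \<le> \<sigma> 1"
    using third_label_symmetry_step[of 2] a by simp
  moreover have "\<sigma> (1 + (a - 2)) < a"
    using \<sigma>_into a by (auto simp: image_subset_iff)
  ultimately have "\<sigma> 1 = 1"
    using chain[of "a - 2"] a by simp
  then have \<sigma>_pos: "\<sigma> c = c" if "1 \<le> c" "c < a" for c
    using chain[of "c - 1"] that by simp
  have \<sigma>_0: "\<sigma> 0 = 0"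
  proof (rule ccontr)
    assume "\<sigma> 0 \<noteq> 0"
    then have "\<sigma> (\<sigma> 0) = \<sigma> 0"
      using \<sigma>_pos[of "\<sigma> 0"] \<sigma>_into a by (auto simp: image_subset_iff)
    then show False
      using \<sigma>_inj \<open>\<sigma> 0 \<noteq> 0\<close> \<sigma>_into a by (metis image_subset_iff inj_onD lessThan_iff not_gr_zero order_less_le_trans zero_less_numeral)
  qed
  have \<tau>_pos: "\<tau> c = c" if "1 \<le> c" "c < a" for c
    using that third_label_symmetry_step[of c] \<sigma>_pos third_label_symmetry_column_one
    by (cases "c = 1") auto
  have \<tau>_0: "\<tau> 0 = 0"
  proof (rule ccontr)
    assume "\<tau> 0 \<noteq> 0"
    then have "\<tau> (\<tau> 0) = \<tau> 0"
      using \<tau>_pos[of "\<tau> 0"] \<tau>_into a by (auto simp: image_subset_iff)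
    then show False
      using \<tau>_inj \<open>\<tau> 0 \<noteq> 0\<close> \<tau>_into a by (metis image_subset_iff inj_onD lessThan_iff not_gr_zero order_less_le_trans zero_less_numeral)
  qed
  show "r < a \<Longrightarrow> \<sigma> r = r" "c < a \<Longrightarrow> \<tau> c = c"
    using \<sigma>_pos \<sigma>_0 \<tau>_pos \<tau>_0 by (metis less_one not_less)+
qed

end

lemma grid_symmetry_product:
  fixes a :: nat
  assumes h: "h permutes {..<a^2}" and a: "0 < a"
    and rows: "preserves_fibres (\<lambda>x. x div a) {..<a^2} h"
    and cols: "preserves_fibres (\<lambda>x. x mod a) {..<a^2} h"
  obtains \<sigma> \<tau> where "\<sigma> ` {..<a} \<subseteq> {..<a}" "\<tau> ` {..<a} \<subseteq> {..<a}"
    "inj_on \<sigma> {..<a}" "inj_on \<tau> {..<a}"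
    "\<And>r c. r < a \<Longrightarrow> c < a \<Longrightarrow> h (a * r + c) = a * \<sigma> r + \<tau> c"
proof
  define \<sigma> where "\<sigma> r = h (a * r) div a" for r
  define \<tau> where "\<tau> c = h c mod a" for c
  have row_start: "a * r < a^2" if "r < a" for r :: nat
    using grid_index_less[of r a 0] that a by simp
  have col_start: "c < a^2" if "c < a" for c :: nat
    using grid_index_less[of 0 a c] that by simp
  have h_into: "h x < a^2" if "x < a^2" for x
    using permutes_in_image[OF h] that by simp
  show "\<sigma> ` {..<a} \<subseteq> {..<a}"
    using row_start h_into div_less_of_less_square by (auto simp: \<sigma>_def)
  show "\<tau> ` {..<a} \<subseteq> {..<a}"
    using a by (auto simp: \<tau>_def)
  show "inj_on \<sigma> {..<a}"
    using rows row_start a by (auto simp: inj_on_def \<sigma>_def preserves_fibres_def)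
  show "inj_on \<tau> {..<a}"
    using cols col_start by (auto simp: inj_on_def \<tau>_def preserves_fibres_def)
  show "h (a * r + c) = a * \<sigma> r + \<tau> c" if "r < a" "c < a" for r c
  proof -
    have x: "a * r + c < a^2"
      using grid_index_less that .
    have "h (a * r + c) div a = h (a * r) div a"
      using rows x row_start[OF that(1)] that by (simp add: preserves_fibres_def)
    moreover have "h (a * r + c) mod a = h c mod a"
      using cols x col_start[OF that(2)] that by (simp add: preserves_fibres_def)
    ultimately show ?thesis
      unfolding \<sigma>_def \<tau>_def by (metis mult_div_mod_eq)
  qed
qed

definition grid_transpose :: "nat \<Rightarrow> nat \<Rightarrow> nat" where
  "grid_transpose a x = (if x < a^2 then a * (x mod a) + x div a else x)"

lemma grid_transpose_less: "x < a^2 \<Longrightarrow> grid_transpose a x < a^2"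
  by (cases "a = 0") (auto simp: grid_transpose_def intro!: grid_index_less div_less_of_less_square)

lemma grid_transpose_div: "x < a^2 \<Longrightarrow> grid_transpose a x div a = x mod a"
  by (cases "a = 0") (auto simp: grid_transpose_def div_less_of_less_square)

lemma grid_transpose_involution: "x < a^2 \<Longrightarrow> grid_transpose a (grid_transpose a x) = x"
proof -
  assume x: "x < a^2"
  have "grid_transpose a (grid_transpose a x) = a * (grid_transpose a x mod a) + x mod a"
    using grid_transpose_less[OF x] grid_transpose_div[OF x] by (simp add: grid_transpose_def)
  also have "grid_transpose a x mod a = x div a"
    using x div_less_of_less_square[OF x] by (simp add: grid_transpose_def)
  finally show ?thesis
    by simp
qed

lemma grid_transpose_permutes: "grid_transpose a permutes {..<a^2}"
proof (rule bij_imp_permutes)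
  show "bij_betw (grid_transpose a) {..<a^2} {..<a^2}"
    by (rule bij_betw_byWitness[where f' = "grid_transpose a"])
      (auto simp: grid_transpose_involution grid_transpose_less)
qed (simp add: grid_transpose_def)

text \<open>Enumerates the cells of the a \<times> a grid column 0 first, then the remaining cells row by row.\<close>
definition col0_first :: "nat \<Rightarrow> nat \<Rightarrow> nat" where
  "col0_first a y =
    (if y < a^2 then (if y mod a = 0 then y div a else a + (y div a) * (a - 1) + y mod a - 1) else y)"

definition col0_first_inv :: "nat \<Rightarrow> nat \<Rightarrow> nat" where
  "col0_first_inv a z =
    (if z < a^2 then (if z < a then a * z else a * ((z - a) div (a - 1)) + (z - a) mod (a - 1) + 1) else z)"

lemma col0_first_inverse:
  assumes a: "a = Suc b" "1 \<le> b" and y: "y < a^2"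
  shows "col0_first a y < a^2 \<and> col0_first_inv a (col0_first a y) = y"
proof -
  define r where "r = y div a"
  define c where "c = y mod a"
  have y_rc: "y = a * r + c"
    by (simp add: r_def c_def)
  have r: "r \<le> b"
    using div_less_of_less_square[OF y] a by (simp add: r_def)
  have c: "c \<le> b"
    using a by (simp add: c_def)
  show ?thesis
  proof (cases "c = 0")
    case True
    then have "col0_first a y = r"
      using y by (simp add: col0_first_def r_def c_def)
    moreover have "r < a"
      using r a by simp
    moreover have "r < a^2"
      using r a by (simp add: power2_eq_square)
    ultimately show ?thesis
      using True y_rc by (simp add: col0_first_inv_def)
  next
    case False
    then obtain c' where c': "c = Suc c'"
      by (cases c) auto
    have "r * b \<le> b * b"
      using r by simp
    have "a + r * b + c - 1 = r * b + c' + a"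
      using c' by simp
    also have "\<dots> < b * b + b + a"
      using \<open>r * b \<le> b * b\<close> c c' by linarith
    also have "\<dots> = a^2"
      using a by (simp add: power2_eq_square)
    finally have "a + r * b + c - 1 < a^2" .
    moreover have "col0_first a y = a + r * b + c - 1"
      using y False a by (simp add: col0_first_def r_def c_def)
    moreover have "a + r * b + c - 1 - a = c' + r * b" "\<not> a + r * b + c - 1 < a"
      using c' by simp_all
    moreover have "(c' + r * b) div b = r" "(c' + r * b) mod b = c'"
      using c c' by simp_all
    ultimately show ?thesis
      using a c' y_rc by (simp add: col0_first_inv_def)
  qed
qed

lemma col0_first_inv_inverse:
  assumes a: "a = Suc b" "1 \<le> b" and z: "z < a^2"
  shows "col0_first_inv a z < a^2 \<and> col0_first a (col0_first_inv a z) = z"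
proof (cases "z < a")
  case True
  have "a * z < a^2"
    using True by (simp add: power2_eq_square)
  moreover have "0 < a"
    using a by simp
  then have "a * z mod a = 0" "a * z div a = z"
    by simp_all
  ultimately show ?thesis
    using True z by (simp add: col0_first_inv_def col0_first_def)
next
  case False
  define q where "q = (z - a) div b"
  define m where "m = (z - a) mod b"
  have "z - a < a * b"
    using z False a by (simp add: power2_eq_square algebra_simps)
  then have q: "q < a"
    using a by (simp add: q_def div_less_iff_less_mult mult.commute)
  have m: "m + 1 < a"
    using a by (simp add: m_def)
  have inv_z: "col0_first_inv a z = a * q + (m + 1)"
    using z False a by (simp add: col0_first_inv_def q_def m_def)
  have "(a * q + (m + 1)) div a = q"
    by (rule div_nat_eqI) (use m in auto)
  moreover have "(a * q + (m + 1)) mod a = m + 1"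
    using m by (metis add.commute mod_less mod_mult_self2)
  moreover have "a * q + (m + 1) < a^2"
    using grid_index_less[OF q m] .
  moreover have "a + q * b + m = z"
    using False a by (simp add: q_def m_def)
  ultimately show ?thesis
    using inv_z a by (simp add: col0_first_def)
qed

lemma col0_first_permutes:
  assumes "2 \<le> a"
  shows "col0_first a permutes {..<a^2}"
proof -
  obtain b where a: "a = Suc b" "1 \<le> b"
    using assms by (cases a) auto
  show ?thesis
  proof (rule bij_imp_permutes)
    show "bij_betw (col0_first a) {..<a^2} {..<a^2}"
      by (rule bij_betw_byWitness[where f' = "col0_first_inv a"])
        (use col0_first_inverse[OF a] col0_first_inv_inverse[OF a] in auto)
  qed (simp add: col0_first_def)
qed

lemma col0_first_div:
  assumes a: "2 \<le> a" and r: "r < a" and c: "c < a"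
  shows "col0_first a (a * r + c) div a = (if c = 0 then 0 else if c \<le> r then r else r + 1)"
proof -
  have cell: "a * r + c < a^2" "(a * r + c) div a = r" "(a * r + c) mod a = c"
    using grid_index_less[OF r c] c by simp_all
  show ?thesis
  proof (cases "c = 0")
    case True
    then show ?thesis
      using cell r by (simp add: col0_first_def)
  next
    case False
    then have "col0_first a (a * r + c) = a + r * (a - 1) + c - 1"
      using cell by (simp add: col0_first_def)
    moreover have "(a + r * (a - 1) + c - 1) div a = (if c \<le> r then r else r + 1)"
    proof (cases "c \<le> r")
      case True
      then show ?thesis
        by (intro div_nat_eqI) (use False r a in \<open>auto simp: algebra_simps\<close>)
    next
      case le: False
      then show ?thesis
        by (intro div_nat_eqI) (use False c a in \<open>auto simp: algebra_simps\<close>)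
    qed
    ultimately show ?thesis
      using False by simp
  qed
qed

definition third_perm :: "nat \<Rightarrow> nat \<Rightarrow> nat" where
  "third_perm a = col0_first a \<circ> transpose 0 1"

lemma third_perm_permutes: "2 \<le> a \<Longrightarrow> third_perm a permutes {..<a^2}"
  unfolding third_perm_def
  by (intro permutes_compose col0_first_permutes permutes_swap_id)
    (auto simp: power2_eq_square intro: less_le_trans[of _ 2 "a * a"] mult_le_mono[of 2 a 1 a, simplified])

lemma third_perm_div:
  assumes a: "2 \<le> a" and r: "r < a" and c: "c < a"
  shows "third_perm a (a * r + c) div a = third_label r c"
proof -
  consider "r = 0" "c = 0" | "r = 0" "c = 1" | "a * r + c \<noteq> 0" "a * r + c \<noteq> 1"
  proof (cases "r = 0")
    case False
    then have "a \<le> a * r"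
      by simp
    then have "a * r + c \<noteq> 0" "a * r + c \<noteq> 1"
      using a by linarith+
    then show ?thesis
      using that(3) by blast
  qed (use that in \<open>cases "c = 0"; cases "c = 1"; auto\<close>)
  then show ?thesis
  proof cases
    case 1
    then show ?thesis
      using col0_first_div[OF a, of 0 1] a by (simp add: third_perm_def third_label_def)
  next
    case 2
    then show ?thesis
      using col0_first_div[OF a, of 0 0] a by (simp add: third_perm_def third_label_def)
  next
    case 3
    then show ?thesis
      using col0_first_div[OF a r c] by (auto simp: third_perm_def third_label_def transpose_def)
  qed
qed

lemma grid_symmetry_trivial:
  fixes a :: nat
  assumes a: "3 \<le> a" and h: "h permutes {..<a^2}"
    and rows: "preserves_fibres (\<lambda>x. x div a) {..<a^2} h"
    and cols: "preserves_fibres (\<lambda>x. x mod a) {..<a^2} h"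
    and labels: "preserves_fibres (\<lambda>x. third_label (x div a) (x mod a)) {..<a^2} h"
  shows "h = id"
proof -
  have a0: "0 < a"
    using a by simp
  obtain \<sigma> \<tau> where \<sigma>\<tau>: "\<sigma> ` {..<a} \<subseteq> {..<a}" "\<tau> ` {..<a} \<subseteq> {..<a}"
      "inj_on \<sigma> {..<a}" "inj_on \<tau> {..<a}"
    and h_cell: "\<And>r c. r < a \<Longrightarrow> c < a \<Longrightarrow> h (a * r + c) = a * \<sigma> r + \<tau> c"
    using grid_symmetry_product[OF h a0 rows cols] by blast
  have label_h: "third_label (h (a * r + c) div a) (h (a * r + c) mod a) = third_label (\<sigma> r) (\<tau> c)"
    if "r < a" "c < a" for r c
    using h_cell[OF that] \<sigma>\<tau>(2) that by (auto simp: image_subset_iff)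
  have "third_label (\<sigma> r) (\<tau> c) = third_label (\<sigma> r') (\<tau> c') \<longleftrightarrow>
      third_label r c = third_label r' c'"
    if "r < a" "c < a" "r' < a" "c' < a" for r c r' c'
    using labels[unfolded preserves_fibres_def, rule_format, of "a * r + c" "a * r' + c'"]
      grid_index_less label_h that by simp
  then have "preserves_fibres (\<lambda>(r, c). third_label r c) ({..<a} \<times> {..<a}) (map_prod \<sigma> \<tau>)"
    by (auto simp: preserves_fibres_def)
  then have \<sigma>_id: "\<sigma> r = r" and \<tau>_id: "\<tau> c = c" if "r < a" "c < a" for r c
    using third_label_symmetry_trivial[OF a \<sigma>\<tau>] that by blast+
  show "h = id"
  proof
    fix x
    show "h x = id x"
    proof (cases "x < a^2")
      case True
      then have "x div a < a" "x mod a < a"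
        using div_less_of_less_square a0 by simp_all
      then show ?thesis
        using h_cell[of "x div a" "x mod a"] \<sigma>_id \<tau>_id by simp
    next
      case False
      then show ?thesis
        using permutes_not_in[OF h] by simp
    qed
  qed
qed

lemma mem_conjugate_wreath_stab_relabel:
  assumes g: "g permutes {..<a^2}" and a: "0 < a" and f: "\<And>x. x < a^2 \<Longrightarrow> g x div a = f x"
    and h: "h \<in> conjugate (wreath_stab a) g"
  shows "h permutes {..<a^2}" and "preserves_fibres f {..<a^2} h"
proof -
  show h_perm: "h permutes {..<a^2}"
    using h g a by (simp add: mem_conjugate_wreath_stab_iff)
  have "h ` {..<a^2} \<subseteq> {..<a^2}"
    using permutes_image[OF h_perm] by simp
  then have "preserves_fibres (\<lambda>x. g x div a) {..<a^2} h \<longleftrightarrow> preserves_fibres f {..<a^2} h"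
    by (rule preserves_fibres_cong) (simp add: f)
  moreover have "preserves_fibres (\<lambda>x. g x div a) {..<a^2} h"
    using h g a by (simp add: mem_conjugate_wreath_stab_iff)
  ultimately show "preserves_fibres f {..<a^2} h"
    by simp
qed

lemma id_mem_conjugate_wreath_stab:
  "g permutes {..<a^2} \<Longrightarrow> 0 < a \<Longrightarrow> id \<in> conjugate (wreath_stab a) g"
  by (simp add: mem_conjugate_wreath_stab_iff permutes_id preserves_fibres_def)

lemma third_perm_div_label: "2 \<le> a \<Longrightarrow> x < a^2 \<Longrightarrow> third_perm a x div a = third_label (x div a) (x mod a)"
  using third_perm_div[of a "x div a" "x mod a"] div_less_of_less_square[of x a] by simp

lemma wreath_stab_base_of_size_three:
  assumes a: "3 \<le> a"
  shows "(\<Inter>g\<in>{id, grid_transpose a, third_perm a}. conjugate (wreath_stab a) g) = {id}"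
proof
  have a0: "0 < a" and a2: "2 \<le> a"
    using a by simp_all
  show "(\<Inter>g\<in>{id, grid_transpose a, third_perm a}. conjugate (wreath_stab a) g) \<subseteq> {id}"
  proof
    fix h assume "h \<in> (\<Inter>g\<in>{id, grid_transpose a, third_perm a}. conjugate (wreath_stab a) g)"
    then have h: "h \<in> conjugate (wreath_stab a) id" "h \<in> conjugate (wreath_stab a) (grid_transpose a)"
      "h \<in> conjugate (wreath_stab a) (third_perm a)"
      by auto
    have "h permutes {..<a^2}" "preserves_fibres (\<lambda>x. x div a) {..<a^2} h"
      using mem_conjugate_wreath_stab_relabel[OF permutes_id a0 _ h(1)] by simp_all
    moreover have "preserves_fibres (\<lambda>x. x mod a) {..<a^2} h"
      using mem_conjugate_wreath_stab_relabel(2)[OF grid_transpose_permutes a0 grid_transpose_div h(2)] .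
    moreover have "preserves_fibres (\<lambda>x. third_label (x div a) (x mod a)) {..<a^2} h"
      using mem_conjugate_wreath_stab_relabel(2)[OF third_perm_permutes[OF a2] a0 third_perm_div_label[OF a2] h(3)] .
    ultimately have "h = id"
      by (rule grid_symmetry_trivial[OF a])
    then show "h \<in> {id}"
      by simp
  qed
  show "{id} \<subseteq> (\<Inter>g\<in>{id, grid_transpose a, third_perm a}. conjugate (wreath_stab a) g)"
    using id_mem_conjugate_wreath_stab[OF _ a0] permutes_id grid_transpose_permutes
      third_perm_permutes[OF a2]
    by simp
qed

lemma core_wreath_stab:
  assumes "3 \<le> a"
  shows "core (Sym (a^2)) (wreath_stab a) = {id}"
proof
  have "{id, grid_transpose a, third_perm a} \<subseteq> Sym (a^2)"
    using assms permutes_id grid_transpose_permutes third_perm_permutes by (simp add: Sym_def)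
  then have "core (Sym (a^2)) (wreath_stab a) \<subseteq>
      (\<Inter>g\<in>{id, grid_transpose a, third_perm a}. conjugate (wreath_stab a) g)"
    unfolding core_def by (rule INT_anti_mono) simp
  then show "core (Sym (a^2)) (wreath_stab a) \<subseteq> {id}"
    by (simp only: wreath_stab_base_of_size_three[OF assms])
  show "{id} \<subseteq> core (Sym (a^2)) (wreath_stab a)"
    using id_mem_conjugate_wreath_stab assms by (auto simp: core_def Sym_def)
qed

lemma card_three_base: "2 \<le> a \<Longrightarrow> card {id, grid_transpose a, third_perm a} = 3"
proof -
  assume a: "2 \<le> a"
  then have "1 < a^2"
    by (simp add: power2_eq_square less_le_trans[OF _ mult_le_mono[of 2 a 1 a]])
  then have "grid_transpose a 0 = 0" "grid_transpose a 1 = a" "third_perm a 0 = a"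
    using a by (simp_all add: grid_transpose_def third_perm_def col0_first_def)
  moreover have "a \<noteq> 0" "a \<noteq> 1"
    using a by simp_all
  ultimately have "id \<noteq> grid_transpose a" "id \<noteq> third_perm a" "grid_transpose a \<noteq> third_perm a"
    by (metis id_apply)+
  then show ?thesis
    by simp
qed

lemma base_size_eqI:
  assumes "S \<subseteq> G" "finite S" "card S = k" "(\<Inter>g\<in>S. conjugate H g) = core G H"
    and "\<And>S. S \<subseteq> G \<Longrightarrow> finite S \<Longrightarrow> card S < k \<Longrightarrow> (\<Inter>g\<in>S. conjugate H g) \<noteq> core G H"
  shows "base_size G H = k"
  unfolding base_size_def
proof (rule Least_equality)
  show "\<exists>S. S \<subseteq> G \<and> finite S \<and> card S = k \<and> (\<Inter>g\<in>S. conjugate H g) = core G H"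
    using assms(1-4) by blast
qed (use assms(5) not_less in blast)

theorem proposition2p6:
  fixes a n :: nat
  assumes "n = a^2" and "a \<ge> 3"
  shows "base_size (Sym n) (wreath_stab a) = 3"
  unfolding assms(1)
proof (rule base_size_eqI)
  show "{id, grid_transpose a, third_perm a} \<subseteq> Sym (a^2)"
    using assms(2) permutes_id grid_transpose_permutes third_perm_permutes by (simp add: Sym_def)
  show "finite {id, grid_transpose a, third_perm a}" "card {id, grid_transpose a, third_perm a} = 3"
    using card_three_base assms(2) by simp_all
  show "(\<Inter>g\<in>{id, grid_transpose a, third_perm a}. conjugate (wreath_stab a) g) =
      core (Sym (a^2)) (wreath_stab a)"
    using wreath_stab_base_of_size_three core_wreath_stab assms(2) by simp
  show "(\<Inter>g\<in>S. conjugate (wreath_stab a) g) \<noteq> core (Sym (a^2)) (wreath_stab a)"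
    if "S \<subseteq> Sym (a^2)" "finite S" "card S < 3" for S
    using wreath_stab_no_base_of_size_two[of a S] core_wreath_stab assms(2) that by auto
qed

end
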